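(* Let $a,b$ be distinct assertion variables. The implication $$(1\hookrightarrow\_)\wedge(a*b)\ \Rightarrow\ \big((1\hookrightarrow\_)*a\big)\vee\big((1\hookrightarrow\_)*b\big)$$ holds in the unary interpretation (for every $\eta$ and every $\rho:\mathsf{AVar}\to\mathsf{IRel}_1$, the meaning of the left side is contained in that of the right side), but fails in the binary interpretation: with $\rho(a)=\{([1],[])\}^\uparrow$ and $\rho(b)=\{([],[1])\}^\uparrow$, the pair $([1],[1])$ belongs to the binary meaning of the left side while both disjuncts on the right have empty binary meaning.
   Context: $\mathsf{Heap}$: finite partial functions $\mathsf{PosInt}\to\mathsf{Int}$; $[]$ the empty heap; $[m]$ the heap storing $0$ at location $m$ and nothing else; $g\sqsubseteq h$ means $h$ extends $g$; $h\cdot g$ union of disjoint heaps; componentwise on $\mathsf{Heap}^n$; $S^\uparrow$ is the upward closure of a set $S$ of tuples. $\mathsf{IRel}_n$: upward closed subsets of $\mathsf{Heap}^n$; $p*q=\{\mathbf f\cdot\mathbf g\mid\mathbf f\in p,\mathbf g\in q,\text{componentwise disjoint}\}$; $\Delta_n(X)=\{(h_1,\dots,h_n)\mid\exists f\in X.\ \forall k.\ f\sqsubseteq h_k\}$ for $X\subseteq\mathsf{Heap}$. Assertion semantics with $\eta$ (ordinary variables to integers) and $\rho:\mathsf{AVar}\to\mathsf{IRel}_n$: primitive assertions $P$ mean $\Delta_n$ of their standard set of heaps, variables $a$ mean $\rho(a)$, $\wedge,\vee,*$ mean $\cap,\cup,*$, $\exists$ means union over integer values. $1\hookrightarrow\_$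 abbreviates $\exists y.\,1\hookrightarrow y$, whose standard set of heaps is $\{h\mid 1\in\operatorname{dom}(h)\}$. Binary: $n=2$; unary: $n=1$. *)

theory Defs
  imports Main
begin

typedef heap = "{h :: nat \<rightharpoonup> int. finite (dom h) \<and> 0 \<notin> dom h}"
  by (rule exI[of _ Map.empty]) simp

setup_lifting type_definition_heap

lift_definition hsub :: "heap \<Rightarrow> heap \<Rightarrow> bool" is "\<lambda>g h. g \<subseteq>\<^sub>m h" .

lift_definition hdisj :: "heap \<Rightarrow> heap \<Rightarrow> bool" is "\<lambda>g h. dom g \<inter> dom h = {}" .

lift_definition hunion :: "heap \<Rightarrow> heap \<Rightarrow> heap" is "\<lambda>g h. g ++ h" by auto

lift_definition hemp :: heap is "Map.empty" by simp

lift_definition hcell :: "nat \<Rightarrow> heap" is "\<lambda>m. if m = 0 then Map.empty else [m \<mapsto> 0]"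
  by auto

lift_definition hlookup :: "heap \<Rightarrow> nat \<Rightarrow> int option" is "\<lambda>h m. h m" .

section \<open>Tuples of heaps (elements of Heap^n are lists of length n)\<close>

definition upclose :: "nat \<Rightarrow> heap list set \<Rightarrow> heap list set" where
  "upclose n S = {hs. length hs = n \<and> (\<exists>gs\<in>S. list_all2 hsub gs hs)}"

definition IRel :: "nat \<Rightarrow> heap list set \<Rightarrow> bool" where
  "IRel n p \<longleftrightarrow> (\<forall>hs\<in>p. length hs = n) \<and>
     (\<forall>gs hs. gs \<in> p \<longrightarrow> length hs = n \<longrightarrow> list_all2 hsub gs hs \<longrightarrow> hs \<in> p)"

definition sstar :: "heap list set \<Rightarrow> heap list set \<Rightarrow> heap list set" where
  "sstar p q = {map2 hunion fs gs | fs gs. fs \<in> p \<and> gs \<in> q \<and> list_all2 hdisj fs gs}"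

definition Delta :: "nat \<Rightarrow> heap set \<Rightarrow> heap list set" where
  "Delta n X = {hs. length hs = n \<and> (\<exists>f\<in>X. \<forall>k<n. hsub f (hs ! k))}"

type_synonym var = string

datatype expr = Num int | Var var

datatype 'av assn =
    PointsTo expr expr
  | AVar 'av
  | Conj "'av assn" "'av assn"
  | Disj "'av assn" "'av assn"
  | SStar "'av assn" "'av assn"
  | Ex var "'av assn"

fun eval :: "(var \<Rightarrow> int) \<Rightarrow> expr \<Rightarrow> int" where
  "eval \<eta> (Num k) = k"
| "eval \<eta> (Var x) = \<eta> x"

definition pts_std :: "int \<Rightarrow> int \<Rightarrow> heap set" where
  "pts_std l v = {h. l > 0 \<and> hlookup h (nat l) = Some v}"

fun sem :: "nat \<Rightarrow> (var \<Rightarrow> int) \<Rightarrow> ('av \<Rightarrow> heap list set) \<Rightarrow> 'av assn \<Rightarrow> heap list set" where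
  "sem n \<eta> \<rho> (PointsTo e1 e2) = Delta n (pts_std (eval \<eta> e1) (eval \<eta> e2))"
| "sem n \<eta> \<rho> (AVar a) = \<rho> a"
| "sem n \<eta> \<rho> (Conj A B) = sem n \<eta> \<rho> A \<inter> sem n \<eta> \<rho> B"
| "sem n \<eta> \<rho> (Disj A B) = sem n \<eta> \<rho> A \<union> sem n \<eta> \<rho> B"
| "sem n \<eta> \<rho> (SStar A B) = sstar (sem n \<eta> \<rho> A) (sem n \<eta> \<rho> B)"
| "sem n \<eta> \<rho> (Ex x A) = (\<Union>v. sem n (\<eta>(x := v)) \<rho> A)"

text \<open>1 \<hookrightarrow> _  abbreviates  \<exists>y. 1 \<hookrightarrow> y\<close>
definition one_pts_any :: "'av assn" where
  "one_pts_any = Ex ''y'' (PointsTo (Num 1) (Var ''y''))"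

end

theory Submission
  imports Defs
begin

text \<open>
  Unary case: a heap h = x \<cdot> y in a * b that owns location 1 must have location 1
  in x or in y.  The part owning it is itself a model of 1 \<hookrightarrow> _, so h lies in
  (1 \<hookrightarrow> _) * b or, using commutativity of *, in (1 \<hookrightarrow> _) * a.

  Binary case: the pair ([1],[1]) splits as ([1],[]) \<cdot> ([],[1]), which gives the
  left side.  On the right, every pair in the meaning of 1 \<hookrightarrow> _ owns location 1
  in both components, while every pair in \<rho>(a) (resp. \<rho>(b)) owns it in the first
  (resp. second) component; disjointness then makes both stars empty.
\<close>

lift_definition hpoint :: "nat \<Rightarrow> int \<Rightarrow> heap" is "\<lambda>m v. if m = 0 then Map.empty else [m \<mapsto> v]"
  by auto

lemma hsub_refl: "hsub h h"
  by transfer simp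

lemma hsub_lookup: "hsub f h \<Longrightarrow> hlookup f m = Some v \<Longrightarrow> hlookup h m = Some v"
  by transfer (auto simp: map_le_def dom_def)

lemma hsub_hpoint_iff: "hsub (hpoint (Suc m) v) h \<longleftrightarrow> hlookup h (Suc m) = Some v"
  by transfer (auto simp: map_le_def)

lemma hlookup_hpoint: "hlookup (hpoint (Suc m) v) (Suc m) = Some v"
  by transfer simp

lemma hlookup_hcell: "hlookup (hcell (Suc m)) (Suc m) = Some 0"
  by transfer simp

lemma hdisj_lookup: "hdisj f g \<Longrightarrow> hlookup f m \<noteq> None \<Longrightarrow> hlookup g m = None"
  by transfer auto

lemma hlookup_hunion_None:
  "hlookup (hunion f g) m = None \<longleftrightarrow> hlookup f m = None \<and> hlookup g m = None"
  by transfer (auto simp: map_add_def split: option.splits)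

lemma hdisj_sym: "hdisj f g \<Longrightarrow> hdisj g f"
  by transfer auto

lemma hunion_comm: "hdisj f g \<Longrightarrow> hunion f g = hunion g f"
  by transfer (metis map_add_comm)

lemma hunion_hemp_right: "hunion h hemp = h"
  by transfer simp

lemma hunion_hemp_left: "hunion hemp h = h"
  by transfer simp

lemma hdisj_hemp: "hdisj h hemp" "hdisj hemp h"
  by (transfer, simp)+

lemma sem_one_pts_any_iff:
  "hs \<in> sem n \<eta> \<rho> one_pts_any \<longleftrightarrow>
     length hs = n \<and> (\<exists>v. \<forall>k<n. hlookup (hs ! k) 1 = Some v)"
proof
  assume "hs \<in> sem n \<eta> \<rho> one_pts_any"
  then obtain f v where "length hs = n" "hlookup f 1 = Some v" "\<forall>k<n. hsub f (hs ! k)"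
    by (auto simp: one_pts_any_def Delta_def pts_std_def)
  then show "length hs = n \<and> (\<exists>v. \<forall>k<n. hlookup (hs ! k) 1 = Some v)"
    using hsub_lookup by blast
next
  assume "length hs = n \<and> (\<exists>v. \<forall>k<n. hlookup (hs ! k) 1 = Some v)"
  then obtain v where "length hs = n" "\<forall>k<n. hsub (hpoint 1 v) (hs ! k)"
    using hsub_hpoint_iff[of 0] by auto
  then show "hs \<in> sem n \<eta> \<rho> one_pts_any"
    using hlookup_hpoint[of 0 v]
    by (auto simp: one_pts_any_def Delta_def pts_std_def)
qed

lemma sstar_intro:
  "fs \<in> p \<Longrightarrow> gs \<in> q \<Longrightarrow> list_all2 hdisj fs gs \<Longrightarrow> map2 hunion fs gs \<in> sstar p q"
  unfolding sstar_def by blast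

lemma map2_hunion_comm:
  "list_all2 hdisj fs gs \<Longrightarrow> map2 hunion fs gs = map2 hunion gs fs"
  by (induction rule: list_all2_induct) (auto dest: hunion_comm)

lemma sstar_comm: "sstar p q = sstar q p"
proof -
  have "sstar p q \<subseteq> sstar q p" for p q
  proof
    fix hs assume "hs \<in> sstar p q"
    then obtain fs gs where "fs \<in> p" "gs \<in> q" "list_all2 hdisj fs gs"
      and "hs = map2 hunion fs gs" by (auto simp: sstar_def)
    moreover have "list_all2 hdisj gs fs"
      using \<open>list_all2 hdisj fs gs\<close> by (simp add: list_all2_conv_all_nth hdisj_sym)
    ultimately show "hs \<in> sstar q p"
      using sstar_intro map2_hunion_comm by metis
  qed
  then show ?thesis by blast
qed

text \<open>
  If, at component k, every tuple of p and every tuple of q owns location m,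
  then p * q is empty: the two parts of a split could not be disjoint.
\<close>
lemma sstar_empty_if_shared_location:
  assumes p: "\<And>fs. fs \<in> p \<Longrightarrow> k < length fs \<and> hlookup (fs ! k) m \<noteq> None"
    and q: "\<And>gs. gs \<in> q \<Longrightarrow> hlookup (gs ! k) m \<noteq> None"
  shows "sstar p q = {}"
proof (rule ccontr)
  assume "sstar p q \<noteq> {}"
  then obtain fs gs where "fs \<in> p" "gs \<in> q" "list_all2 hdisj fs gs"
    by (auto simp: sstar_def)
  then have "hdisj (fs ! k) (gs ! k)"
    using p by (auto simp: list_all2_conv_all_nth)
  then show False
    using p q \<open>fs \<in> p\<close> \<open>gs \<in> q\<close> hdisj_lookup by blast
qed

lemma IRel_length: "IRel n p \<Longrightarrow> hs \<in> p \<Longrightarrow> length hs = n"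
  by (simp add: IRel_def)

lemma length_Suc_0_conv_singleton: "length xs = Suc 0 \<longleftrightarrow> (\<exists>x. xs = [x])"
  by (cases xs) auto

lemma unary_points_to_distributes:
  assumes p: "IRel 1 p" and q: "IRel 1 q"
    and one: "hs \<in> sem 1 \<eta> \<rho> one_pts_any" and star: "hs \<in> sstar p q"
  shows "hs \<in> sstar (sem 1 \<eta> \<rho> one_pts_any) p \<union> sstar (sem 1 \<eta> \<rho> one_pts_any) q"
proof -
  obtain fs gs where fs: "fs \<in> p" and gs: "gs \<in> q" and disj: "list_all2 hdisj fs gs"
    and hs: "hs = map2 hunion fs gs"
    using star by (auto simp: sstar_def)
  have "length fs = 1" "length gs = 1"
    using IRel_length fs gs p q by blast+
  then obtain x y where "fs = [x]" "gs = [y]"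
    by (auto simp: length_Suc_0_conv_singleton)
  with fs gs disj hs have x: "[x] \<in> p" and y: "[y] \<in> q" and "hdisj x y"
    and hs_xy: "hs = [hunion x y]" by auto
  have "hlookup (hunion x y) 1 \<noteq> None"
    using one hs_xy by (auto simp: sem_one_pts_any_iff)
  then consider "hlookup x 1 \<noteq> None" | "hlookup y 1 \<noteq> None"
    by (metis hlookup_hunion_None)
  then show ?thesis
  proof cases
    case 1
    then have "[x] \<in> sem 1 \<eta> \<rho> one_pts_any" by (auto simp: sem_one_pts_any_iff)
    then have "map2 hunion [x] [y] \<in> sstar (sem 1 \<eta> \<rho> one_pts_any) q"
      using y \<open>hdisj x y\<close> by (intro sstar_intro) simp_all
    then have "hs \<in> sstar (sem 1 \<eta> \<rho> one_pts_any) q"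
      using hs_xy by simp
    then show ?thesis by blast
  next
    case 2
    then have "[y] \<in> sem 1 \<eta> \<rho> one_pts_any" by (auto simp: sem_one_pts_any_iff)
    then have "map2 hunion [x] [y] \<in> sstar p (sem 1 \<eta> \<rho> one_pts_any)"
      using x \<open>hdisj x y\<close> by (intro sstar_intro) simp_all
    then have "hs \<in> sstar p (sem 1 \<eta> \<rho> one_pts_any)"
      using hs_xy by simp
    then show ?thesis by (simp add: sstar_comm)
  qed
qed

lemma upclose_refl:
  assumes "gs \<in> S" and "length gs = n"
  shows "gs \<in> upclose n S"
proof -
  have "list_all2 hsub gs gs"
    by (rule list_all2_refl) (rule hsub_refl)
  then show ?thesis
    using assms unfolding upclose_def by blast
qed

lemma upclose_lookup:
  assumes "gs \<in> upclose n S"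
    and gen: "\<And>fs. fs \<in> S \<Longrightarrow> k < length fs \<and> hlookup (fs ! k) m = Some v"
  shows "hlookup (gs ! k) m = Some v"
proof -
  obtain fs where "fs \<in> S" and "list_all2 hsub fs gs"
    using assms(1) unfolding upclose_def by blast
  then have "hsub (fs ! k) (gs ! k)"
    using gen list_all2_nthD by blast
  then show ?thesis
    using gen \<open>fs \<in> S\<close> hsub_lookup by blast
qed

lemma binary_points_to_star_empty:
  assumes "k < 2" and q: "\<And>gs. gs \<in> q \<Longrightarrow> hlookup (gs ! k) 1 \<noteq> None"
  shows "sstar (sem 2 \<eta> \<rho> one_pts_any) q = {}"
proof (rule sstar_empty_if_shared_location[where k = k and m = 1])
  fix fs assume "fs \<in> sem 2 \<eta> \<rho> one_pts_any"
  then show "k < length fs \<and> hlookup (fs ! k) 1 \<noteq> None"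
    using \<open>k < 2\<close> unfolding sem_one_pts_any_iff by auto
qed (rule q)

text \<open>
  The main theorem.
\<close>
theorem mainTheorem16:
  fixes a b :: 'av
  assumes "a \<noteq> b"
  shows "(\<forall>\<eta> (\<rho> :: 'av \<Rightarrow> heap list set). (\<forall>c. IRel 1 (\<rho> c)) \<longrightarrow>
            sem 1 \<eta> \<rho> (Conj one_pts_any (SStar (AVar a) (AVar b)))
            \<subseteq> sem 1 \<eta> \<rho> (Disj (SStar one_pts_any (AVar a)) (SStar one_pts_any (AVar b))))
       \<and> (\<forall>\<eta> (\<rho> :: 'av \<Rightarrow> heap list set).
            \<rho> a = upclose 2 {[hcell 1, hemp]} \<longrightarrow> \<rho> b = upclose 2 {[hemp, hcell 1]} \<longrightarrow>
            [hcell 1, hcell 1] \<in> sem 2 \<eta> \<rho> (Conj one_pts_any (SStar (AVar a) (AVar b)))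
            \<and> sem 2 \<eta> \<rho> (SStar one_pts_any (AVar a)) = {}
            \<and> sem 2 \<eta> \<rho> (SStar one_pts_any (AVar b)) = {})"
proof (intro conjI allI impI subsetI)
  fix \<eta> \<rho> hs
  assume "\<forall>c. IRel 1 (\<rho> c :: heap list set)"
    and "hs \<in> sem 1 \<eta> \<rho> (Conj one_pts_any (SStar (AVar a) (AVar b)))"
  then show "hs \<in> sem 1 \<eta> \<rho> (Disj (SStar one_pts_any (AVar a)) (SStar one_pts_any (AVar b)))"
    using unary_points_to_distributes[of "\<rho> a" "\<rho> b" hs \<eta> \<rho>] by auto
next
  fix \<eta> and \<rho> :: "'av \<Rightarrow> heap list set"
  assume a: "\<rho> a = upclose 2 {[hcell 1, hemp]}" and b: "\<rho> b = upclose 2 {[hemp, hcell 1]}"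
  have "[hcell 1, hemp] \<in> \<rho> a" "[hemp, hcell 1] \<in> \<rho> b"
    using a b by (simp_all add: upclose_refl)
  then have "map2 hunion [hcell 1, hemp] [hemp, hcell 1] \<in> sstar (\<rho> a) (\<rho> b)"
    by (intro sstar_intro) (simp_all add: hdisj_hemp)
  moreover have "[hcell 1, hcell 1] \<in> sem 2 \<eta> \<rho> one_pts_any"
    using hlookup_hcell[of 0] by (auto simp: sem_one_pts_any_iff less_2_cases_iff)
  ultimately show "[hcell 1, hcell 1] \<in> sem 2 \<eta> \<rho> (Conj one_pts_any (SStar (AVar a) (AVar b)))"
    by (simp add: hunion_hemp_left hunion_hemp_right)
  have "hlookup (gs ! 0) 1 \<noteq> None" if "gs \<in> \<rho> a" for gs
    using upclose_lookup[of gs 2 "{[hcell 1, hemp]}" 0 1 0] that a hlookup_hcell[of 0] by auto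
  then show "sem 2 \<eta> \<rho> (SStar one_pts_any (AVar a)) = {}"
    using binary_points_to_star_empty[of 0 "\<rho> a"] by simp
  have "hlookup (gs ! 1) 1 \<noteq> None" if "gs \<in> \<rho> b" for gs
    using upclose_lookup[of gs 2 "{[hemp, hcell 1]}" 1 1 0] that b hlookup_hcell[of 0] by auto
  then show "sem 2 \<eta> \<rho> (SStar one_pts_any (AVar b)) = {}"
    using binary_points_to_star_empty[of 1 "\<rho> b"] by simp
qed

end
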